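(* Let $\Lambda=\{\lambda_n\}_{n\ge1}\subset\mathbb{D}$ be a Blaschke sequence of distinct points, $h\in H^2$, and $n\ge1$. Then for each $\zeta\in\mathbb{T}$, $$(A_{\overline{h}}\gamma_n)(\zeta)=\sqrt{1-|\lambda_n|^2}\sum_{l=1}^n\frac{\overline{h(\lambda_l)}}{1-\overline{\lambda_l}\zeta}\,\frac{1}{\overline{(B_n)_{\lambda_l}(\lambda_l)}}\,\frac{1-|\lambda_l|^2}{1-\overline{\lambda_l}\lambda_n},$$ where $(B_n)_{\lambda_l}=\prod_{k=1,k\ne l}^nb_{\lambda_k}$.
   Context: $\mathbb{D}$ is the open unit disk, $\mathbb{T}$ the unit circle, $H^2$ the Hardy space. $I$ denotes the Blaschke product with zeros $\Lambda$, $K_I=H^2\ominus IH^2$, $P_I$ the orthogonal projection of $L^2(\mathbb{T})$ onto $K_I$, and $A_{\overline{h}}f=P_I(\overline{h}f)$. For $\lambda\in\mathbb{D}$, $b_\lambda(z)=\frac{z-\lambda}{1-\overline{\lambda}z}$, and $\gamma_n(z)=\frac{\sqrt{1-|\lambda_n|^2}}{1-\overline{\lambda_n}z}\prod_{k=1}^{n-1}b_{\lambda_k}(z)$. With $B_n=\prod_{k=1}^nb_{\lambda_k}$, $A_{\overline{h}}\gamma_n$ lies in $K_{B_n}$, a space of rational functions with no poles in the closed disk, and $(A_{\overline{h}}\gamma_n)(\zeta)$ is the value of this rational function at $\zeta$. *)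

theory Defs
  imports "HOL-Analysis.Analysis"
begin

text \<open>Hardy space H^2 of the disk, represented by Taylor coefficient sequences.\<close>

definition H2 :: "(nat \<Rightarrow> complex) set" where
  "H2 = {a. summable (\<lambda>k. (cmod (a k))^2)}"

definition hval :: "(nat \<Rightarrow> complex) \<Rightarrow> complex \<Rightarrow> complex" where
  "hval a z = (\<Sum>k. a k * z ^ k)"

definition H2_inner :: "(nat \<Rightarrow> complex) \<Rightarrow> (nat \<Rightarrow> complex) \<Rightarrow> complex" where
  "H2_inner a b = (\<Sum>k. a k * cnj (b k))"

definition coeffs :: "(complex \<Rightarrow> complex) \<Rightarrow> (nat \<Rightarrow> complex)" where
  "coeffs f = (THE a. a \<in> H2 \<and> (\<forall>z\<in>ball 0 1. f z = hval a z))"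

definition blaschke_seq :: "(nat \<Rightarrow> complex) \<Rightarrow> bool" where
  "blaschke_seq lam \<longleftrightarrow> (\<forall>n\<ge>1. lam n \<in> ball 0 1) \<and> inj_on lam {1..}
     \<and> summable (\<lambda>n. 1 - cmod (lam (Suc n)))"

definition bfac :: "complex \<Rightarrow> complex \<Rightarrow> complex" where
  "bfac l z = (z - l) / (1 - cnj l * z)"

definition nbfac :: "complex \<Rightarrow> complex \<Rightarrow> complex" where
  "nbfac l z = (if l = 0 then z else (complex_of_real (cmod l) / l) * ((l - z) / (1 - cnj l * z)))"

definition blaschke_prod :: "(nat \<Rightarrow> complex) \<Rightarrow> complex \<Rightarrow> complex" where
  "blaschke_prod lam z = (\<Prod>n. nbfac (lam (Suc n)) z)"

definition IH2 :: "(nat \<Rightarrow> complex) \<Rightarrow> (nat \<Rightarrow> complex) set" where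
  "IH2 lam = {a \<in> H2. \<exists>f\<in>H2. \<forall>z\<in>ball 0 1. hval a z = blaschke_prod lam z * hval f z}"

definition K :: "(nat \<Rightarrow> complex) \<Rightarrow> (nat \<Rightarrow> complex) set" where
  "K lam = {a \<in> H2. \<forall>b\<in>IH2 lam. H2_inner a b = 0}"

text \<open>L^2(T), represented by Fourier coefficient sequences indexed by the integers.\<close>
definition L2_inner :: "(int \<Rightarrow> complex) \<Rightarrow> (int \<Rightarrow> complex) \<Rightarrow> complex" where
  "L2_inner f g = (\<Sum>\<^sub>\<infinity>m. f m * cnj (g m))"

definition emb :: "(nat \<Rightarrow> complex) \<Rightarrow> int \<Rightarrow> complex" where
  "emb a m = (if m \<ge> 0 then a (nat m) else 0)"

text \<open>Fourier coefficients of the boundary function conj(h) for h in H^2.\<close>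
definition conj_coeffs :: "(nat \<Rightarrow> complex) \<Rightarrow> int \<Rightarrow> complex" where
  "conj_coeffs h m = (if m \<le> 0 then cnj (h (nat (- m))) else 0)"

text \<open>Fourier coefficients of a pointwise product on T (convolution).\<close>
definition conv :: "(int \<Rightarrow> complex) \<Rightarrow> (int \<Rightarrow> complex) \<Rightarrow> int \<Rightarrow> complex" where
  "conv f g m = (\<Sum>\<^sub>\<infinity>k. f k * g (m - k))"

definition P_I :: "(nat \<Rightarrow> complex) \<Rightarrow> (int \<Rightarrow> complex) \<Rightarrow> (nat \<Rightarrow> complex)" where
  "P_I lam g = (THE u. u \<in> K lam \<and> (\<forall>v\<in>K lam. L2_inner (\<lambda>m. g m - emb u m) (emb v) = 0))"

text \<open>A_{conj h} f = P_I (conj h * f), f given by its coefficient sequence.\<close>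
definition A_op :: "(nat \<Rightarrow> complex) \<Rightarrow> (nat \<Rightarrow> complex) \<Rightarrow> (nat \<Rightarrow> complex) \<Rightarrow> (nat \<Rightarrow> complex)" where
  "A_op lam h f = P_I lam (conv (conj_coeffs h) (emb f))"

definition gamma :: "(nat \<Rightarrow> complex) \<Rightarrow> nat \<Rightarrow> complex \<Rightarrow> complex" where
  "gamma lam n z = complex_of_real (sqrt (1 - (cmod (lam n))^2)) / (1 - cnj (lam n) * z)
      * (\<Prod>k\<in>{1..<n}. bfac (lam k) z)"

definition Bsub :: "(nat \<Rightarrow> complex) \<Rightarrow> nat \<Rightarrow> nat \<Rightarrow> complex \<Rightarrow> complex" where
  "Bsub lam n l z = (\<Prod>k\<in>{1..n} - {l}. bfac (lam k) z)"

end

theory Submission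
  imports Defs
begin

text \<open>
  The function \<open>\<gamma>\<^sub>n\<close> is rational with simple poles at the points \<open>1 / conj \<lambda>\<^sub>l\<close>, so a partial
  fraction expansion (Lagrange interpolation) writes it as a combination
  \<open>\<Sum> c\<^sub>l k\<^bsub>\<lambda>\<^sub>l\<^esub>\<close> of Szego kernels \<open>k\<^sub>\<lambda>(z) = 1 / (1 - conj \<lambda> z)\<close>. Multiplication by \<open>conj h\<close>
  followed by projection onto \<open>H\<^sup>2\<close> sends \<open>k\<^sub>\<lambda>\<close> to \<open>conj (h \<lambda>) k\<^sub>\<lambda>\<close>, and kernels at the zeros of \<open>I\<close>
  already lie in \<open>K\<^sub>I\<close>, because \<open>\<langle>f, k\<^sub>\<lambda>\<rangle> = f \<lambda>\<close> vanishes on \<open>I H\<^sup>2\<close>. Hence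
  \<open>A\<^bsub>conj h\<^esub> \<gamma>\<^sub>n = \<Sum> c\<^sub>l conj (h \<lambda>\<^sub>l) k\<^bsub>\<lambda>\<^sub>l\<^esub>\<close>, a rational function continuous up to the circle.
\<close>

lemma summable_norm_mult_of_square_summable:
  fixes f g :: "nat \<Rightarrow> 'a::real_normed_div_algebra"
  assumes "summable (\<lambda>k. (norm (f k))^2)" and "summable (\<lambda>k. (norm (g k))^2)"
  shows "summable (\<lambda>k. norm (f k * g k))"
proof (rule summable_comparison_test')
  show "summable (\<lambda>k. (norm (f k))^2 + (norm (g k))^2)"
    using assms by (rule summable_add)
  show "norm (norm (f k * g k)) \<le> (norm (f k))^2 + (norm (g k))^2" for k
  proof -
    have "norm (norm (f k * g k)) = norm (f k) * norm (g k)" by (simp add: norm_mult)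
    moreover have "norm (f k) * norm (g k) \<le> 2 * norm (f k) * norm (g k)" by simp
    ultimately show ?thesis
      using sum_squares_bound[of "norm (f k)" "norm (g k)"] by linarith
  qed
qed

lemma norm_power_squared: "(norm (z ^ k))^2 = ((norm z)^2) ^ k"
  for z :: "'a::real_normed_div_algebra"
  unfolding norm_power power_mult [symmetric] by (simp add: mult.commute)

lemma H2_summable_norm_powser:
  assumes "a \<in> H2" and "norm z < 1"
  shows "summable (\<lambda>k. norm (a k * z ^ k))"
proof (rule summable_norm_mult_of_square_summable)
  show "summable (\<lambda>k. (norm (a k))^2)" using assms(1) by (simp add: H2_def)
  have "summable (\<lambda>k. ((norm z)^2) ^ k)"
    using assms(2) by (intro summable_geometric) (simp add: abs_square_less_1)
  then show "summable (\<lambda>k. (norm (z ^ k))^2)" by (simp add: norm_power_squared)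
qed

lemma H2_hval_sums:
  assumes "a \<in> H2" and "norm z < 1"
  shows "(\<lambda>k. a k * z ^ k) sums hval a z"
  unfolding hval_def
  by (rule summable_sums, rule summable_norm_cancel, rule H2_summable_norm_powser [OF assms])

lemma H2_hval_sums_cnj:
  assumes "a \<in> H2" and "norm z < 1"
  shows "(\<lambda>k. cnj (a k) * cnj z ^ k) sums cnj (hval a z)"
proof -
  have "(\<lambda>k. cnj (a k * z ^ k)) sums cnj (hval a z)"
    using H2_hval_sums [OF assms] by (simp only: sums_cnj)
  then show ?thesis by simp
qed

lemma H2_inner_summable:
  assumes "a \<in> H2" and "b \<in> H2"
  shows "summable (\<lambda>k. a k * cnj (b k))"
  by (rule summable_norm_cancel, rule summable_norm_mult_of_square_summable)
    (use assms in \<open>simp_all add: H2_def\<close>)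

lemma H2_add:
  assumes "a \<in> H2" and "b \<in> H2"
  shows "(\<lambda>k. a k + b k) \<in> H2"
proof -
  have "summable (\<lambda>k. 2 * (norm (a k))^2 + 2 * (norm (b k))^2)"
    using assms by (intro summable_add summable_mult) (simp_all add: H2_def)
  moreover have "norm ((norm (a k + b k))^2) \<le> 2 * (norm (a k))^2 + 2 * (norm (b k))^2" for k
  proof -
    have "(norm (a k + b k))^2 \<le> (norm (a k) + norm (b k))^2"
      by (intro power_mono norm_triangle_ineq) simp
    also have "\<dots> \<le> 2 * (norm (a k))^2 + 2 * (norm (b k))^2"
      using sum_squares_bound[of "norm (a k)" "norm (b k)"] by (simp add: power2_sum)
    finally show ?thesis by simp
  qed
  ultimately show ?thesis
    unfolding H2_def by (blast intro: summable_comparison_test')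
qed

lemma H2_uminus: "a \<in> H2 \<Longrightarrow> (\<lambda>k. - a k) \<in> H2"
  by (simp add: H2_def)

lemma H2_diff: "a \<in> H2 \<Longrightarrow> b \<in> H2 \<Longrightarrow> (\<lambda>k. a k - b k) \<in> H2"
  using H2_add[OF _ H2_uminus, of a b] by simp

lemma H2_sum:
  assumes "finite S" and "\<And>l. l \<in> S \<Longrightarrow> f l \<in> H2"
  shows "(\<lambda>k. \<Sum>l\<in>S. f l k) \<in> H2"
  using assms
proof (induction S rule: finite_induct)
  case empty
  then show ?case by (simp add: H2_def)
next
  case (insert x F)
  then show ?case using H2_add[of "f x" "\<lambda>k. \<Sum>l\<in>F. f l k"] by simp
qed

lemma H2_geometric:
  assumes "norm w < 1"
  shows "(\<lambda>k. c * w ^ k) \<in> H2"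
proof -
  have "summable (\<lambda>k. (norm c)^2 * ((norm w)^2) ^ k)"
    using assms by (intro summable_mult summable_geometric) (simp add: abs_square_less_1)
  then show ?thesis by (simp add: H2_def norm_mult power_mult_distrib norm_power_squared)
qed

lemma H2_inner_diff_left:
  assumes "a \<in> H2" and "b \<in> H2" and "c \<in> H2"
  shows "H2_inner (\<lambda>k. a k - b k) c = H2_inner a c - H2_inner b c"
  unfolding H2_inner_def left_diff_distrib
  by (rule suminf_diff [symmetric]) (intro H2_inner_summable assms)+

lemma H2_eq_0_if_inner_self:
  assumes "a \<in> H2" and "(\<Sum>\<^sub>\<infinity>k. a k * cnj (a k)) = 0"
  shows "a = (\<lambda>_. 0)"
proof -
  have sq: "summable (\<lambda>k. (norm (a k))^2)" using assms(1) by (simp add: H2_def)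
  have "((\<lambda>k. complex_of_real ((norm (a k))^2)) has_sum of_real (\<Sum>k. (norm (a k))^2)) UNIV"
    using sq by (intro norm_summable_imp_has_sum sums_of_real summable_sums) (simp_all add: norm_power)
  then have "((\<lambda>k. a k * cnj (a k)) has_sum of_real (\<Sum>k. (norm (a k))^2)) UNIV"
    by (simp only: complex_norm_square)
  then have "(\<Sum>k. (norm (a k))^2) = 0"
    using assms(2) infsumI by fastforce
  then show ?thesis
    using suminf_eq_zero_iff[OF sq] by auto
qed

lemma coeffs_eqI:
  assumes "a \<in> H2" and "\<forall>z\<in>ball 0 1. f z = hval a z"
  shows "coeffs f = a"
  unfolding coeffs_def
proof (rule the_equality)
  show "a \<in> H2 \<and> (\<forall>z\<in>ball 0 1. f z = hval a z)" using assms by blast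
next
  fix b assume b: "b \<in> H2 \<and> (\<forall>z\<in>ball 0 1. f z = hval b z)"
  have radius: "fps_conv_radius (Abs_fps c) > 0" if "c \<in> H2" for c
  proof -
    have "summable (\<lambda>k. c k * (1/2) ^ k)"
      using H2_summable_norm_powser[OF that, of "1/2"] by (simp add: summable_norm_cancel)
    then have "ereal (norm (1/2 :: complex)) \<le> conv_radius c" by (rule conv_radius_geI)
    then have "0 < conv_radius c" by (rule less_le_trans [rotated]) simp
    then show ?thesis by (simp add: fps_conv_radius_def Abs_fps_inverse)
  qed
  have "eventually (\<lambda>z. z \<in> ball (0::complex) 1) (nhds 0)"
    by (rule eventually_nhds_in_open) auto
  then have "eventually (\<lambda>z. eval_fps (Abs_fps b) z = eval_fps (Abs_fps a) z) (nhds 0)"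
  proof eventually_elim
    case (elim z)
    then have "hval b z = hval a z" using assms(2) b by metis
    then show ?case by (simp only: eval_fps_def hval_def fps_nth_Abs_fps)
  qed
  moreover have "0 < fps_conv_radius (Abs_fps b)" and "0 < fps_conv_radius (Abs_fps a)"
    using radius assms(1) b by blast+
  ultimately have "Abs_fps b = Abs_fps a"
    by (intro eval_fps_eqD)
  then show "b = a" by (simp add: fps_eq_iff fun_eq_iff)
qed

lemma norm_cnj_mult_less_1:
  assumes "norm w < 1" and "norm z \<le> 1"
  shows "norm (cnj w * z) < 1"
proof -
  have "norm (cnj w * z) \<le> norm w" using assms(2) by (simp add: norm_mult mult_left_le)
  then show ?thesis using assms(1) by linarith
qed

lemma one_minus_cnj_mult_neq_0:
  assumes "norm w < 1" and "norm z \<le> 1"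
  shows "1 - cnj w * z \<noteq> 0"
  using norm_cnj_mult_less_1 [OF assms] by auto

definition kernel_coeffs :: "'a set \<Rightarrow> ('a \<Rightarrow> complex) \<Rightarrow> ('a \<Rightarrow> complex) \<Rightarrow> nat \<Rightarrow> complex" where
  "kernel_coeffs S c w k = (\<Sum>l\<in>S. c l * cnj (w l) ^ k)"

lemma kernel_coeffs_in_H2:
  assumes "finite S" and "\<forall>l\<in>S. norm (w l) < 1"
  shows "kernel_coeffs S c w \<in> H2"
  unfolding kernel_coeffs_def using assms by (intro H2_sum H2_geometric) auto

lemma hval_kernel_coeffs:
  assumes "finite S" and "\<forall>l\<in>S. norm (w l) < 1" and "norm z < 1"
  shows "hval (kernel_coeffs S c w) z = (\<Sum>l\<in>S. c l / (1 - cnj (w l) * z))"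
proof -
  have "(\<lambda>k. \<Sum>l\<in>S. c l * (cnj (w l) * z) ^ k) sums (\<Sum>l\<in>S. c l * (1 / (1 - cnj (w l) * z)))"
  proof (rule sums_sum)
    fix l assume "l \<in> S"
    then have "norm (cnj (w l) * z) < 1"
      using assms by (intro norm_cnj_mult_less_1) auto
    then show "(\<lambda>k. c l * (cnj (w l) * z) ^ k) sums (c l * (1 / (1 - cnj (w l) * z)))"
      by (intro sums_mult geometric_sums)
  qed
  then show ?thesis
    unfolding hval_def kernel_coeffs_def
    by (simp add: sum_distrib_right power_mult_distrib mult.assoc sums_iff)
qed

lemma H2_inner_kernel_coeffs:
  assumes "finite S" and "\<forall>l\<in>S. norm (w l) < 1" and "b \<in> H2"
  shows "H2_inner (kernel_coeffs S c w) b = (\<Sum>l\<in>S. c l * cnj (hval b (w l)))"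
proof -
  have "(\<lambda>k. \<Sum>l\<in>S. c l * (cnj (b k) * cnj (w l) ^ k)) sums (\<Sum>l\<in>S. c l * cnj (hval b (w l)))"
    using assms by (intro sums_sum sums_mult H2_hval_sums_cnj) auto
  moreover have "kernel_coeffs S c w k * cnj (b k) = (\<Sum>l\<in>S. c l * (cnj (b k) * cnj (w l) ^ k))" for k
    by (simp add: kernel_coeffs_def sum_distrib_left mult_ac)
  ultimately show ?thesis
    unfolding H2_inner_def by (simp add: sums_iff)
qed

lemma conv_conj_coeffs_emb:
  "conv (conj_coeffs h) (emb c) (int m) = (\<Sum>\<^sub>\<infinity>j. cnj (h j) * c (m + j))"
proof -
  define F where "F k = conj_coeffs h k * emb c (int m - k)" for k
  have "conv (conj_coeffs h) (emb c) (int m) = infsum F (range (\<lambda>j::nat. - int j))"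
    unfolding conv_def F_def [symmetric]
    by (rule infsum_cong_neutral)
      (auto simp: F_def conj_coeffs_def image_iff, metis minus_minus nat_0_le neg_0_le_iff_le)
  also have "\<dots> = infsum (F \<circ> (\<lambda>j::nat. - int j)) UNIV"
    by (rule infsum_reindex) (auto simp: inj_on_def)
  also have "\<dots> = (\<Sum>\<^sub>\<infinity>j. cnj (h j) * c (m + j))"
    by (simp add: F_def conj_coeffs_def emb_def nat_add_distrib o_def)
  finally show ?thesis .
qed

lemma L2_inner_emb: "L2_inner f (emb v) = (\<Sum>\<^sub>\<infinity>n. f (int n) * cnj (v n))"
proof -
  define F where "F m = f m * cnj (emb v m)" for m
  have "L2_inner f (emb v) = infsum F (range int)"
    unfolding L2_inner_def F_def [symmetric]
    by (rule infsum_cong_neutral) (auto simp: F_def emb_def image_iff, metis nat_0_le)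
  also have "\<dots> = (\<Sum>\<^sub>\<infinity>n. f (int n) * cnj (v n))"
    by (simp add: infsum_reindex F_def emb_def o_def)
  finally show ?thesis .
qed

lemma conv_conj_coeffs_kernel_coeffs:
  assumes "finite S" and "\<forall>l\<in>S. norm (w l) < 1" and "h \<in> H2"
  shows "conv (conj_coeffs h) (emb (kernel_coeffs S c w)) (int m)
           = kernel_coeffs S (\<lambda>l. cnj (hval h (w l)) * c l) w m"
proof -
  define T where "T j = (\<Sum>l\<in>S. (c l * cnj (w l) ^ m) * (cnj (h j) * cnj (w l) ^ j))" for j
  have "T sums (\<Sum>l\<in>S. (c l * cnj (w l) ^ m) * cnj (hval h (w l)))"
    unfolding T_def using assms by (intro sums_sum sums_mult H2_hval_sums_cnj) auto
  moreover have "summable (\<lambda>j. norm (T j))"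
  proof (rule summable_comparison_test')
    show "summable (\<lambda>j. \<Sum>l\<in>S. norm (c l * cnj (w l) ^ m) * norm (h j * w l ^ j))"
      using assms by (intro summable_sum summable_mult H2_summable_norm_powser) auto
    show "norm (norm (T j)) \<le> (\<Sum>l\<in>S. norm (c l * cnj (w l) ^ m) * norm (h j * w l ^ j))" for j
      using norm_sum [of "\<lambda>l. (c l * cnj (w l) ^ m) * (cnj (h j) * cnj (w l) ^ j)" S]
      by (simp add: T_def norm_mult norm_power)
  qed
  ultimately have "(T has_sum (\<Sum>l\<in>S. (c l * cnj (w l) ^ m) * cnj (hval h (w l)))) UNIV"
    by (intro norm_summable_imp_has_sum)
  moreover have "(\<lambda>j. cnj (h j) * kernel_coeffs S c w (m + j)) = T"
    by (rule ext) (simp add: T_def kernel_coeffs_def sum_distrib_left power_add mult_ac)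
  ultimately have "conv (conj_coeffs h) (emb (kernel_coeffs S c w)) (int m)
                     = (\<Sum>l\<in>S. (c l * cnj (w l) ^ m) * cnj (hval h (w l)))"
    by (simp add: conv_conj_coeffs_emb infsumI)
  then show ?thesis by (simp add: kernel_coeffs_def mult_ac)
qed

lemma nbfac_minus_1_bound:
  assumes a: "norm a < 1" and z: "norm z < 1"
  shows "norm (nbfac a z - 1) \<le> (1 - norm a) * ((1 + norm z) / (1 - norm z))"
proof (cases "a = 0")
  case True
  have "norm (z - 1) \<le> 1 + norm z" using norm_triangle_ineq4 [of z 1] by simp
  also have "\<dots> \<le> (1 + norm z) / (1 - norm z)"
  proof -
    have "(1 + norm z) * (1 - norm z) \<le> 1 + norm z" by (rule mult_left_le) auto
    then show ?thesis using z by (simp add: le_divide_eq)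
  qed
  finally show ?thesis using True by (simp add: nbfac_def)
next
  case False
  define r where "r = norm a"
  have r: "0 < r" "r < 1" using False a by (simp_all add: r_def)
  have den0: "1 - cnj a * z \<noteq> 0" using a z by (intro one_minus_cnj_mult_neq_0) auto
  have den: "1 - norm z \<le> norm (1 - cnj a * z)"
  proof -
    have "norm (cnj a * z) \<le> norm z" using a by (simp add: norm_mult mult_left_le_one_le)
    moreover have "1 - norm (cnj a * z) \<le> norm (1 - cnj a * z)"
      using norm_triangle_ineq2 [of 1 "cnj a * z"] by simp
    ultimately show ?thesis by linarith
  qed
  have "a * cnj a = of_real r * of_real r"
    by (simp add: r_def complex_norm_square [symmetric] power2_eq_square)
  then have num: "of_real r * (a - z) - a * (1 - cnj a * z) = - (of_real (1 - r) * (a + of_real r * z))"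
    by (simp add: algebra_simps)
  have "nbfac a z - 1 = - (of_real (1 - r) * (a + of_real r * z)) / (a * (1 - cnj a * z))"
    unfolding num [symmetric] using False den0 by (simp add: nbfac_def r_def field_simps)
  then have "norm (nbfac a z - 1) = (1 - r) * norm (a + of_real r * z) / (r * norm (1 - cnj a * z))"
    using r by (simp add: norm_mult norm_divide r_def del: of_real_diff)
  also have "\<dots> \<le> (1 - r) * (r * (1 + norm z)) / (r * (1 - norm z))"
  proof (rule frac_le)
    have "norm (a + of_real r * z) \<le> r * (1 + norm z)"
      using norm_triangle_ineq [of a "of_real r * z"] r by (simp add: norm_mult r_def algebra_simps)
    then show "(1 - r) * norm (a + of_real r * z) \<le> (1 - r) * (r * (1 + norm z))"
      using r by (simp add: mult_left_mono)
    show "r * (1 - norm z) \<le> r * norm (1 - cnj a * z)" using den r by (simp add: mult_left_mono)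
  qed (use r z in simp_all)
  also have "\<dots> = (1 - norm a) * ((1 + norm z) / (1 - norm z))" using r by (simp add: r_def)
  finally show ?thesis .
qed

lemma blaschke_prod_zero:
  assumes "blaschke_seq lam" and "l \<ge> 1"
  shows "blaschke_prod lam (lam l) = 0"
proof -
  define f where "f = (\<lambda>i. nbfac (lam (Suc i)) (lam l))"
  have z: "norm (lam l) < 1" using assms by (simp add: blaschke_seq_def)
  define C where "C = (1 + norm (lam l)) / (1 - norm (lam l))"
  have "summable (\<lambda>i. (1 - norm (lam (Suc i))) * C)"
    using assms(1) by (intro summable_mult2) (simp add: blaschke_seq_def)
  moreover have "norm (norm (f i - 1)) \<le> (1 - norm (lam (Suc i))) * C" for i
    using nbfac_minus_1_bound [of "lam (Suc i)" "lam l"] assms(1) z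
    by (simp add: f_def C_def blaschke_seq_def)
  ultimately have "summable (\<lambda>i. norm (f i - 1))" by (rule summable_comparison_test')
  \<comment> \<open>\<open>prodinf\<close> is junk for divergent products, so the zero factor only helps once the
      Blaschke condition gives convergence\<close>
  then have "convergent_prod f"
    by (intro abs_convergent_prod_imp_convergent_prod summable_imp_abs_convergent_prod)
  then obtain p where p: "f has_prod p" using convergent_prod_imp_has_prod by blast
  moreover have "f (l - 1) = 0" using assms(2) by (simp add: f_def nbfac_def)
  ultimately have "prodinf f = 0" using has_prod_zeroI has_prod_unique by blast
  then show ?thesis by (simp add: blaschke_prod_def f_def)
qed

lemma kernel_coeffs_in_K:
  assumes "blaschke_seq lam" and "finite S" and "S \<subseteq> {1..}"
  shows "kernel_coeffs S c lam \<in> K lam"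
proof -
  have disk: "\<forall>l\<in>S. norm (lam l) < 1" using assms by (auto simp: blaschke_seq_def)
  have "H2_inner (kernel_coeffs S c lam) b = 0" if b: "b \<in> IH2 lam" for b
  proof -
    obtain f where "b \<in> H2" and f: "\<forall>z\<in>ball 0 1. hval b z = blaschke_prod lam z * hval f z"
      using b by (auto simp: IH2_def)
    have "hval b (lam l) = 0" if "l \<in> S" for l
      using f disk blaschke_prod_zero [OF assms(1)] that assms(3) by auto
    moreover have "H2_inner (kernel_coeffs S c lam) b = (\<Sum>l\<in>S. c l * cnj (hval b (lam l)))"
      using assms(2) disk \<open>b \<in> H2\<close> by (rule H2_inner_kernel_coeffs)
    ultimately show ?thesis by simp
  qed
  then show ?thesis using kernel_coeffs_in_H2 [OF assms(2) disk] by (simp add: K_def)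
qed

lemma K_diff:
  assumes "u \<in> K lam" and "v \<in> K lam"
  shows "(\<lambda>k. u k - v k) \<in> K lam"
  using assms H2_diff H2_inner_diff_left by (auto simp: K_def IH2_def)

lemma P_I_eqI:
  assumes w: "w \<in> K lam" and g: "\<And>k. g (int k) = w k"
  shows "P_I lam g = w"
  unfolding P_I_def
proof (rule the_equality)
  show "w \<in> K lam \<and> (\<forall>v\<in>K lam. L2_inner (\<lambda>m. g m - emb w m) (emb v) = 0)"
    using w by (simp add: L2_inner_emb g emb_def)
next
  fix u assume u: "u \<in> K lam \<and> (\<forall>v\<in>K lam. L2_inner (\<lambda>m. g m - emb u m) (emb v) = 0)"
  define d where "d k = w k - u k" for k
  have "d \<in> K lam" unfolding d_def using w u by (intro K_diff) auto
  then have "L2_inner (\<lambda>m. g m - emb u m) (emb d) = 0" using u by blast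
  then have "(\<Sum>\<^sub>\<infinity>k. d k * cnj (d k)) = 0"
    by (simp add: L2_inner_emb g emb_def d_def)
  with \<open>d \<in> K lam\<close> have "d = (\<lambda>_. 0)" by (intro H2_eq_0_if_inner_self) (simp_all add: K_def)
  then show "u = w" by (auto simp: d_def fun_eq_iff)
qed

lemma lagrange_interpolation:
  fixes p :: "'b::field poly" and \<mu> :: "'a \<Rightarrow> 'b"
  assumes "finite S" and "inj_on \<mu> S" and "degree p < card S"
  shows "poly p t = (\<Sum>l\<in>S. poly p (\<mu> l) * (\<Prod>k\<in>S-{l}. (t - \<mu> k) / (\<mu> l - \<mu> k)))"
proof -
  define L where
    "L = (\<Sum>l\<in>S. smult (poly p (\<mu> l)) (\<Prod>k\<in>S-{l}. smult (1 / (\<mu> l - \<mu> k)) [:- \<mu> k, 1:]))"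
  have poly_L: "poly L x = (\<Sum>l\<in>S. poly p (\<mu> l) * (\<Prod>k\<in>S-{l}. (x - \<mu> k) / (\<mu> l - \<mu> k)))" for x
    by (auto simp: L_def poly_sum poly_prod diff_divide_distrib intro!: sum.cong prod.cong)
  have deg_L: "degree L \<le> card S - 1"
    unfolding L_def
  proof (intro degree_sum_le assms(1))
    fix l assume "l \<in> S"
    have "degree (\<Prod>k\<in>S-{l}. smult (1 / (\<mu> l - \<mu> k)) [:- \<mu> k, 1:])
            \<le> sum (degree \<circ> (\<lambda>k. smult (1 / (\<mu> l - \<mu> k)) [:- \<mu> k, 1:])) (S-{l})"
      by (rule degree_prod_sum_le) (use assms(1) in simp)
    also have "\<dots> \<le> (\<Sum>k\<in>S-{l}. 1)"
      unfolding o_def by (intro sum_mono order_trans [OF degree_smult_le]) simp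
    also have "\<dots> = card S - 1" using assms(1) \<open>l \<in> S\<close> by simp
    finally show "degree (smult (poly p (\<mu> l)) (\<Prod>k\<in>S-{l}. smult (1 / (\<mu> l - \<mu> k)) [:- \<mu> k, 1:]))
                    \<le> card S - 1"
      by (rule order_trans [OF degree_smult_le])
  qed
  have agree: "poly p x = poly L x" if "x \<in> \<mu> ` S" for x
  proof -
    obtain j where j: "j \<in> S" "x = \<mu> j" using \<open>x \<in> \<mu> ` S\<close> by auto
    have "(\<Prod>k\<in>S-{l}. (\<mu> j - \<mu> k) / (\<mu> l - \<mu> k)) = (if l = j then 1 else 0)" if "l \<in> S" for l
    proof (cases "l = j")
      case True
      have "\<mu> j \<noteq> \<mu> k" if "k \<in> S - {j}" for k
        using assms(2) j(1) that by (auto dest: inj_onD)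
      then show ?thesis using True by (auto intro!: prod.neutral)
    next
      case False
      then show ?thesis using assms(1) j(1) by (auto intro: prod_zero)
    qed
    then have "poly L x = (\<Sum>l\<in>S. if l = j then poly p (\<mu> l) else 0)"
      unfolding poly_L j(2) by (intro sum.cong) auto
    then show ?thesis using assms(1) j by simp
  qed
  have card: "card (\<mu> ` S) = card S" using assms(2) by (rule card_image)
  have "p = L"
  proof (rule poly_eqI_degree [where A = "\<mu> ` S"])
    show "degree p < card (\<mu> ` S)" and "degree L < card (\<mu> ` S)"
      using card deg_L assms(3) by linarith+
  qed (rule agree)
  then have "poly p t = poly L t" by simp
  then show ?thesis by (simp only: poly_L)
qed

text \<open>Lagrange interpolation of \<open>\<Prod>k\<in>T. 1 - \<nu> k * t\<close> at \<open>t = 1 / z\<close>, cleared of denominators.\<close>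

lemma prod_partial_fraction:
  fixes \<mu> \<nu> :: "'a \<Rightarrow> complex"
  assumes "finite S" and "finite T" and "card S = Suc (card T)" and "inj_on \<mu> S"
  shows "(\<Prod>k\<in>T. z - \<nu> k)
           = (\<Sum>l\<in>S. (\<Prod>k\<in>T. 1 - \<nu> k * \<mu> l) / (\<Prod>k\<in>S-{l}. \<mu> l - \<mu> k) * (\<Prod>k\<in>S-{l}. 1 - \<mu> k * z))"
    (is "?N z = ?R z")
proof -
  define p where "p = (\<Prod>k\<in>T. [:1, - \<nu> k:])"
  have poly_p: "poly p t = (\<Prod>k\<in>T. 1 - \<nu> k * t)" for t
    by (simp add: p_def poly_prod algebra_simps)
  have "degree p \<le> sum (degree \<circ> (\<lambda>k. [:1, - \<nu> k:])) T"
    unfolding p_def by (rule degree_prod_sum_le) (use assms(2) in simp)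
  also have "\<dots> \<le> card T"
    using sum_bounded_above [of T "degree \<circ> (\<lambda>k. [:1, - \<nu> k:])" 1] by simp
  finally have deg: "degree p < card S" using assms(3) by simp
  have card_remove: "card (S - {l}) = card T" if "l \<in> S" for l
    using assms(1,3) that by simp
  have nonzero: "?N z = ?R z" if "z \<noteq> 0" for z
  proof -
    have "z ^ card T * poly p (1 / z) = (\<Prod>k\<in>T. z * (1 - \<nu> k * (1 / z)))"
      by (simp add: poly_p prod.distrib)
    also have "\<dots> = ?N z"
      using that by (intro prod.cong) (simp_all add: field_simps)
    finally have "?N z = z ^ card T * poly p (1 / z)" ..
    also have "\<dots> = z ^ card T * (\<Sum>l\<in>S. poly p (\<mu> l) * (\<Prod>k\<in>S-{l}. (1 / z - \<mu> k) / (\<mu> l - \<mu> k)))"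
      using lagrange_interpolation [OF assms(1,4) deg, of "1 / z"] by (rule arg_cong)
    also have "\<dots> = (\<Sum>l\<in>S. poly p (\<mu> l) * (\<Prod>k\<in>S-{l}. z * ((1 / z - \<mu> k) / (\<mu> l - \<mu> k))))"
      unfolding sum_distrib_left
    proof (intro sum.cong refl)
      fix l assume "l \<in> S"
      have "(\<Prod>k\<in>S-{l}. z * ((1 / z - \<mu> k) / (\<mu> l - \<mu> k)))
              = z ^ card T * (\<Prod>k\<in>S-{l}. (1 / z - \<mu> k) / (\<mu> l - \<mu> k))"
        by (simp only: prod.distrib prod_constant card_remove [OF \<open>l \<in> S\<close>])
      then show "z ^ card T * (poly p (\<mu> l) * (\<Prod>k\<in>S-{l}. (1 / z - \<mu> k) / (\<mu> l - \<mu> k)))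
                   = poly p (\<mu> l) * (\<Prod>k\<in>S-{l}. z * ((1 / z - \<mu> k) / (\<mu> l - \<mu> k)))"
        by (simp only: mult.left_commute)
    qed
    also have "\<dots> = ?R z"
    proof (intro sum.cong refl)
      fix l
      have "z * (1 / z - m) = 1 - m * z" for m
        using that by (simp add: right_diff_distrib mult.commute)
      then have "(\<Prod>k\<in>S-{l}. z * ((1 / z - \<mu> k) / (\<mu> l - \<mu> k)))
                   = (\<Prod>k\<in>S-{l}. 1 - \<mu> k * z) / (\<Prod>k\<in>S-{l}. \<mu> l - \<mu> k)"
        by (simp only: times_divide_eq_right prod_dividef)
      then show "poly p (\<mu> l) * (\<Prod>k\<in>S-{l}. z * ((1 / z - \<mu> k) / (\<mu> l - \<mu> k)))
                   = (\<Prod>k\<in>T. 1 - \<nu> k * \<mu> l) / (\<Prod>k\<in>S-{l}. \<mu> l - \<mu> k) * (\<Prod>k\<in>S-{l}. 1 - \<mu> k * z)"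
        by (simp only: poly_p times_divide_eq_right times_divide_eq_left)
    qed
    finally show ?thesis .
  qed
  define G where "G z = ?N z - ?R z" for z
  have "continuous_on UNIV G" unfolding G_def by (intro continuous_intros)
  then have "(G \<longlongrightarrow> G 0) (at 0)" by (simp add: continuous_on_def)
  moreover have "(G \<longlongrightarrow> 0) (at 0)"
    by (rule tendsto_eventually) (simp add: eventually_at_filter G_def nonzero)
  ultimately have "G 0 = 0" using tendsto_unique [OF at_neq_bot] by blast
  then show ?thesis using nonzero by (cases "z = 0") (auto simp: G_def)
qed

definition gamma_coeff :: "(nat \<Rightarrow> complex) \<Rightarrow> nat \<Rightarrow> nat \<Rightarrow> complex" where
  "gamma_coeff lam n l = complex_of_real (sqrt (1 - (cmod (lam n))^2))
     * (1 / cnj (Bsub lam n l (lam l)))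
     * ((1 - complex_of_real ((cmod (lam l))^2)) / (1 - cnj (lam l) * lam n))"

lemma gamma_coeff_eq:
  assumes disk: "\<forall>k\<in>{1..n}. norm (lam k) < 1" and inj: "inj_on lam {1..n}"
    and "n \<ge> 1" and l: "l \<in> {1..n}"
  shows "gamma_coeff lam n l = complex_of_real (sqrt (1 - (cmod (lam n))^2))
           * ((\<Prod>k\<in>{1..<n}. 1 - lam k * cnj (lam l)) / (\<Prod>k\<in>{1..n}-{l}. cnj (lam l) - cnj (lam k)))"
proof -
  define S where "S = {1..n}"
  define Q where "Q = (\<Prod>k\<in>S-{l}. 1 - lam k * cnj (lam l))"
  define D where "D = (\<Prod>k\<in>S-{l}. cnj (lam l) - cnj (lam k))"
  define P where "P = (\<Prod>k\<in>{1..<n}. 1 - lam k * cnj (lam l))"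
  have factor_nonzero: "1 - lam k * cnj (lam l) \<noteq> 0" if "k \<in> S" for k
  proof -
    have "1 - cnj (lam l) * lam k \<noteq> 0"
      using disk that l by (intro one_minus_cnj_mult_neq_0) (auto simp: S_def less_imp_le)
    then show ?thesis by (simp add: mult.commute)
  qed
  have "D \<noteq> 0"
    using inj l by (auto simp: D_def S_def prod_zero_iff dest: inj_onD)
  have Bsub_eq: "cnj (Bsub lam n l (lam l)) = D / Q"
    unfolding Bsub_def D_def Q_def S_def prod_dividef [symmetric] cnj_prod
    by (intro prod.cong refl) (simp add: bfac_def mult.commute)
  define X where "X = 1 - lam l * cnj (lam l)"
  define Y where "Y = 1 - lam n * cnj (lam l)"
  have "Y \<noteq> 0" using factor_nonzero [of n] assms(3) by (simp add: Y_def S_def)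
  have "X * Q = Y * P"
  proof -
    have "X * Q = (\<Prod>k\<in>S. 1 - lam k * cnj (lam l))"
      unfolding X_def Q_def using l by (simp add: S_def prod.remove)
    also have "S = insert n {1..<n}" using assms(3) by (auto simp: S_def)
    finally show ?thesis by (simp add: Y_def P_def)
  qed
  have "gamma_coeff lam n l = complex_of_real (sqrt (1 - (cmod (lam n))^2)) * (1 / (D / Q) * (X / Y))"
    unfolding gamma_coeff_def Bsub_eq X_def Y_def complex_norm_square by (simp add: mult_ac)
  also have "1 / (D / Q) * (X / Y) = (X * Q) / (D * Y)" by simp
  also have "\<dots> = P / D" using \<open>X * Q = Y * P\<close> \<open>Y \<noteq> 0\<close> by simp
  finally show ?thesis by (simp add: P_def D_def S_def)
qed

lemma gamma_partial_fraction:
  assumes disk: "\<forall>k\<in>{1..n}. norm (lam k) < 1" and inj: "inj_on lam {1..n}"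
    and n: "n \<ge> 1" and z: "norm z < 1"
  shows "gamma lam n z = (\<Sum>l\<in>{1..n}. gamma_coeff lam n l / (1 - cnj (lam l) * z))"
proof -
  define S where "S = {1..n}"
  define s where "s = complex_of_real (sqrt (1 - (cmod (lam n))^2))"
  define P where "P l = (\<Prod>k\<in>S-{l}. 1 - cnj (lam k) * z)" for l
  define W where "W = (\<Prod>k\<in>S. 1 - cnj (lam k) * z)"
  have denom_nonzero: "1 - cnj (lam k) * z \<noteq> 0" if "k \<in> S" for k
    using disk z that by (intro one_minus_cnj_mult_neq_0) (auto simp: S_def)
  have W_split: "W = (1 - cnj (lam l) * z) * P l" if "l \<in> S" for l
    using that by (simp add: W_def P_def S_def prod.remove)
  have "W \<noteq> 0" using denom_nonzero by (simp add: W_def S_def)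
  have "gamma lam n z
          = s / (1 - cnj (lam n) * z) * ((\<Prod>k\<in>{1..<n}. z - lam k) / (\<Prod>k\<in>{1..<n}. 1 - cnj (lam k) * z))"
    unfolding gamma_def s_def bfac_def by (simp only: prod_dividef)
  also have "\<dots> = s * (\<Prod>k\<in>{1..<n}. z - lam k) / W"
  proof -
    have "S = insert n {1..<n}" using n by (auto simp: S_def)
    then have "W = (1 - cnj (lam n) * z) * (\<Prod>k\<in>{1..<n}. 1 - cnj (lam k) * z)"
      unfolding W_def by simp
    then show ?thesis by simp
  qed
  also have "(\<Prod>k\<in>{1..<n}. z - lam k)
      = (\<Sum>l\<in>S. (\<Prod>k\<in>{1..<n}. 1 - lam k * cnj (lam l)) / (\<Prod>k\<in>S-{l}. cnj (lam l) - cnj (lam k)) * P l)"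
  proof -
    have "card S = Suc (card {1..<n})" using n by (simp add: S_def)
    moreover have "inj_on (\<lambda>k. cnj (lam k)) S"
      unfolding S_def inj_on_def using inj by (auto dest: inj_onD)
    ultimately show ?thesis
      unfolding P_def by (intro prod_partial_fraction [where \<mu> = "\<lambda>k. cnj (lam k)" and \<nu> = lam])
        (simp_all add: S_def)
  qed
  also have "s * \<dots> / W = (\<Sum>l\<in>S. gamma_coeff lam n l / (1 - cnj (lam l) * z))"
    unfolding sum_distrib_left sum_divide_distrib
  proof (intro sum.cong refl)
    fix l assume "l \<in> S"
    then have "P l \<noteq> 0" using W_split \<open>W \<noteq> 0\<close> by auto
    then show "s * ((\<Prod>k\<in>{1..<n}. 1 - lam k * cnj (lam l)) / (\<Prod>k\<in>S-{l}. cnj (lam l) - cnj (lam k)) * P l) / W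
                 = gamma_coeff lam n l / (1 - cnj (lam l) * z)"
      using \<open>l \<in> S\<close> gamma_coeff_eq [OF disk inj n] by (simp add: W_split s_def S_def)
  qed
  finally show ?thesis by (simp add: S_def)
qed

lemma coeffs_gamma:
  assumes "\<forall>k\<in>{1..n}. norm (lam k) < 1" and "inj_on lam {1..n}" and "n \<ge> 1"
  shows "coeffs (gamma lam n) = kernel_coeffs {1..n} (gamma_coeff lam n) lam"
  using assms
  by (intro coeffs_eqI kernel_coeffs_in_H2 ballI)
     (simp_all add: hval_kernel_coeffs gamma_partial_fraction)

lemma tendsto_hval_kernel_coeffs:
  assumes "finite S" and "\<forall>l\<in>S. norm (w l) < 1" and "norm \<zeta> \<le> 1"
  shows "((\<lambda>z. hval (kernel_coeffs S c w) z) \<longlongrightarrow> (\<Sum>l\<in>S. c l / (1 - cnj (w l) * \<zeta>)))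
           (at \<zeta> within ball 0 1)"
proof -
  have "((\<lambda>z. \<Sum>l\<in>S. c l / (1 - cnj (w l) * z)) \<longlongrightarrow> (\<Sum>l\<in>S. c l / (1 - cnj (w l) * \<zeta>)))
          (at \<zeta> within ball 0 1)"
    using assms by (intro tendsto_intros one_minus_cnj_mult_neq_0) auto
  moreover have "eventually (\<lambda>z. (\<Sum>l\<in>S. c l / (1 - cnj (w l) * z)) = hval (kernel_coeffs S c w) z)
                   (at \<zeta> within ball 0 1)"
    using assms by (auto simp: eventually_at_filter hval_kernel_coeffs)
  ultimately show ?thesis by (rule Lim_transform_eventually)
qed

theorem corollary3p5:
  fixes lam h :: "nat \<Rightarrow> complex" and n :: nat and \<zeta> :: complex
  assumes "blaschke_seq lam" and "h \<in> H2" and "n \<ge> 1" and "cmod \<zeta> = 1"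
  shows "((\<lambda>z. hval (A_op lam h (coeffs (gamma lam n))) z) \<longlongrightarrow>
     complex_of_real (sqrt (1 - (cmod (lam n))^2)) *
       (\<Sum>l=1..n. cnj (hval h (lam l)) / (1 - cnj (lam l) * \<zeta>)
          * (1 / cnj (Bsub lam n l (lam l)))
          * ((1 - complex_of_real ((cmod (lam l))^2)) / (1 - cnj (lam l) * lam n))))
     (at \<zeta> within ball 0 1)"
proof -
  have disk: "\<forall>k\<in>{1..n}. norm (lam k) < 1" and inj: "inj_on lam {1..n}"
    using assms(1) by (auto simp: blaschke_seq_def intro: inj_on_subset)
  define c where "c l = cnj (hval h (lam l)) * gamma_coeff lam n l" for l
  have "A_op lam h (coeffs (gamma lam n)) = kernel_coeffs {1..n} c lam"
    unfolding A_op_def coeffs_gamma [OF disk inj assms(3)] c_def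
    using assms disk by (intro P_I_eqI kernel_coeffs_in_K conv_conj_coeffs_kernel_coeffs) auto
  moreover have "((\<lambda>z. hval (kernel_coeffs {1..n} c lam) z)
                   \<longlongrightarrow> (\<Sum>l\<in>{1..n}. c l / (1 - cnj (lam l) * \<zeta>))) (at \<zeta> within ball 0 1)"
    using disk assms(4) by (intro tendsto_hval_kernel_coeffs) auto
  ultimately show ?thesis
    by (simp add: c_def gamma_coeff_def sum_distrib_left mult_ac)
qed

end
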